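(* There is an absolute constant $C>0$ such that the following holds. Let $K\ge1$, let $\mathbf{\Phi}\in\mathbb{R}^{m\times n}$ satisfy the RIP of order $2K$ with $\delta_{2K}\in(0,1)$, let $\mathbf{x}\in\mathbb{R}^n$ have exactly $K$ nonzero entries, all of equal magnitude, let $\mathbf{v}\in\mathbb{R}^m$, and $\mathbf{y}=\mathbf{\Phi}\mathbf{x}+\mathbf{v}$. If $\mathrm{SNR}\ge\delta_{2K}^{-3/2}$, then the support $\mathcal{T}^K$ output by OMP after $K$ iterations satisfies $\frac{|\mathcal{T}^K\setminus\mathrm{supp}(\mathbf{x})|}{K} \le C\,\delta_{2K}^{1/2}$.
   Context: $\phi_i$ is the $i$-th column of $\mathbf{\Phi}$. RIP: for an integer $s\ge1$, the isometry constant $\delta_s$ of $\mathbf{\Phi}$ is the smallest $c\in[0,1)$ such that $(1-c)\|\mathbf{z}\|_2^2 \le \|\mathbf{\Phi}\mathbf{z}\|_2^2 \le (1+c)\|\mathbf{z}\|_2^2$ for all $s$-sparse $\mathbf{z}$. $\mathrm{SNR} := \|\mathbf{\Phi}\mathbf{x}\|_2^2/\|\mathbf{v}\|_2^2$. OMP with input $\mathbf{\Phi},\mathbf{y},K$: set $\mathcal{T}^0=\emptyset$, $\mathbf{r}^0=\mathbf{y}$; for $k=1,\dots,K$: choose $t^k \in \arg\max_{i\notin\mathcal{T}^{k-1}} |\langle\phi_i,\mathbf{r}^{k-1}\rangle|$ (ties broken arbitrarily), set $\mathcal{T}^k=\mathcal{T}^{k-1}\cup\{t^k\}$, $\mathbf{x}^k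 = \arg\min_{\mathrm{supp}(\mathbf{u})\subseteq\mathcal{T}^k}\|\mathbf{y}-\mathbf{\Phi}\mathbf{u}\|_2$, $\mathbf{r}^k=\mathbf{y}-\mathbf{\Phi}\mathbf{x}^k$. Output $\mathcal{T}^K$, $\mathbf{x}^K$. *)

theory Defs
  imports Complex_Main
begin

text \<open>Matrices Phi in R^(m x n) are functions nat => nat => real (row l < m, column j < n);
vectors are functions nat => real, only the entries below the dimension matter.\<close>

definition mv :: "(nat \<Rightarrow> nat \<Rightarrow> real) \<Rightarrow> nat \<Rightarrow> (nat \<Rightarrow> real) \<Rightarrow> nat \<Rightarrow> real" where
  "mv Phi n z = (\<lambda>l. \<Sum>j<n. Phi l j * z j)"

definition sqnorm :: "nat \<Rightarrow> (nat \<Rightarrow> real) \<Rightarrow> real" where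
  "sqnorm d w = (\<Sum>l<d. (w l)^2)"

definition supp_vec :: "nat \<Rightarrow> (nat \<Rightarrow> real) \<Rightarrow> nat set" where
  "supp_vec n z = {j. j < n \<and> z j \<noteq> 0}"

definition col_inner :: "(nat \<Rightarrow> nat \<Rightarrow> real) \<Rightarrow> nat \<Rightarrow> nat \<Rightarrow> (nat \<Rightarrow> real) \<Rightarrow> real" where
  "col_inner Phi m i r = (\<Sum>l<m. Phi l i * r l)"

definition rip_ineq :: "(nat \<Rightarrow> nat \<Rightarrow> real) \<Rightarrow> nat \<Rightarrow> nat \<Rightarrow> nat \<Rightarrow> real \<Rightarrow> bool" where
  "rip_ineq Phi m n s c \<longleftrightarrow>
     (\<forall>z. card (supp_vec n z) \<le> s \<longrightarrow>
        (1 - c) * sqnorm n z \<le> sqnorm m (mv Phi n z) \<and>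
        sqnorm m (mv Phi n z) \<le> (1 + c) * sqnorm n z)"

definition rip_const :: "(nat \<Rightarrow> nat \<Rightarrow> real) \<Rightarrow> nat \<Rightarrow> nat \<Rightarrow> nat \<Rightarrow> real \<Rightarrow> bool" where
  "rip_const Phi m n s \<delta> \<longleftrightarrow>
     0 \<le> \<delta> \<and> \<delta> < 1 \<and> rip_ineq Phi m n s \<delta> \<and>
     (\<forall>c. 0 \<le> c \<and> c < 1 \<and> rip_ineq Phi m n s c \<longrightarrow> \<delta> \<le> c)"

definition ls_residual :: "(nat \<Rightarrow> nat \<Rightarrow> real) \<Rightarrow> nat \<Rightarrow> nat \<Rightarrow> (nat \<Rightarrow> real) \<Rightarrow> nat set \<Rightarrow> (nat \<Rightarrow> real) \<Rightarrow> bool" where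
  "ls_residual Phi m n y T r \<longleftrightarrow>
     (\<exists>u. (\<forall>j. j \<notin> T \<longrightarrow> u j = 0) \<and>
          (\<forall>w. (\<forall>j. j \<notin> T \<longrightarrow> w j = 0) \<longrightarrow>
               sqnorm m (\<lambda>l. y l - mv Phi n u l) \<le> sqnorm m (\<lambda>l. y l - mv Phi n w l)) \<and>
          r = (\<lambda>l. y l - mv Phi n u l))"

text \<open>ts = [t^1,...,t^K] is a possible run of OMP (any tie-breaking); T^k = set (take k ts).\<close>
definition omp_run :: "(nat \<Rightarrow> nat \<Rightarrow> real) \<Rightarrow> nat \<Rightarrow> nat \<Rightarrow> (nat \<Rightarrow> real) \<Rightarrow> nat \<Rightarrow> nat list \<Rightarrow> bool" where
  "omp_run Phi m n y K ts \<longleftrightarrow>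
     length ts = K \<and>
     (\<forall>k<K. \<exists>r. ls_residual Phi m n y (set (take k ts)) r \<and>
        ts ! k < n \<and> ts ! k \<notin> set (take k ts) \<and>
        (\<forall>i<n. i \<notin> set (take k ts) \<longrightarrow> \<bar>col_inner Phi m i r\<bar> \<le> \<bar>col_inner Phi m (ts ! k) r\<bar>))"

end

theory Submission
  imports Defs "HOL-Analysis.L2_Norm"
begin

text \<open>Write \<open>\<delta> = e\<^sup>2\<close>, \<open>S = supp x\<close>, \<open>a\<close> for the common magnitude of the nonzero entries of \<open>x\<close>,
and suppose OMP misses \<open>W > 100 e K\<close> indices of \<open>S\<close>. As long as \<open>W\<close> indices of \<open>S\<close> are still
missing, the RIP keeps every residual of norm about \<open>\<surd>W a\<close>, most of which is explained by the
missing columns, so the greedy column correlates with the residual at least \<open>(1 - 3e/4) a\<close> and the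
squared residual drops by at least \<open>(1 - 2e) a\<^sup>2\<close> per iteration. After \<open>K\<close> iterations the squared
residual is at most \<open>\<parallel>y\<parallel>\<^sup>2 - K (1 - 2e) a\<^sup>2 \<le> 6 e K a\<^sup>2\<close>, but it is still at least \<open>W a\<^sup>2 / 2\<close>,
a contradiction. Since \<open>|T\<^sup>K| \<le> K = |S|\<close>, the false indices are at most the missed ones.\<close>

definition dot :: "nat \<Rightarrow> (nat \<Rightarrow> real) \<Rightarrow> (nat \<Rightarrow> real) \<Rightarrow> real" where
  "dot m r w = (\<Sum>l<m. r l * w l)"

definition vnorm :: "nat \<Rightarrow> (nat \<Rightarrow> real) \<Rightarrow> real" where
  "vnorm m w = sqrt (sqnorm m w)"

lemma sqnorm_nonneg: "0 \<le> sqnorm m w"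
  unfolding sqnorm_def by (simp add: sum_nonneg)

lemma vnorm_nonneg: "0 \<le> vnorm m w"
  unfolding vnorm_def using sqnorm_nonneg by simp

lemma vnorm_power2: "(vnorm m w)\<^sup>2 = sqnorm m w"
  unfolding vnorm_def using sqnorm_nonneg by simp

lemma vnorm_eq_L2_set: "vnorm m w = L2_set w {..<m}"
  unfolding vnorm_def L2_set_def sqnorm_def by simp

lemma dot_self: "dot m r r = sqnorm m r"
  unfolding dot_def sqnorm_def by (simp add: power2_eq_square)

lemma dot_le_vnorm_mult: "dot m r w \<le> vnorm m r * vnorm m w"
proof -
  have "dot m r w \<le> (\<Sum>l<m. \<bar>r l\<bar> * \<bar>w l\<bar>)"
    unfolding dot_def by (rule sum_mono) (metis abs_ge_self abs_mult)
  also have "\<dots> \<le> vnorm m r * vnorm m w"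
    unfolding vnorm_eq_L2_set by (rule L2_set_mult_ineq)
  finally show ?thesis .
qed

lemma vnorm_add_le: "vnorm m (\<lambda>l. f l + g l) \<le> vnorm m f + vnorm m g"
  unfolding vnorm_eq_L2_set by (rule L2_set_triangle_ineq)

lemma vnorm_le_vnorm_add: "vnorm m f \<le> vnorm m (\<lambda>l. f l + g l) + vnorm m g"
proof -
  have "vnorm m f \<le> vnorm m (\<lambda>l. f l + g l) + vnorm m (\<lambda>l. - g l)"
    using vnorm_add_le[of m "\<lambda>l. f l + g l" "\<lambda>l. - g l"] by simp
  also have "vnorm m (\<lambda>l. - g l) = vnorm m g"
    unfolding vnorm_def sqnorm_def by simp
  finally show ?thesis .
qed

lemma dot_mv: "dot m r (mv Phi n z) = (\<Sum>j<n. z j * col_inner Phi m j r)"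
  unfolding dot_def mv_def col_inner_def
  by (simp add: sum_distrib_left sum_distrib_right mult_ac sum.swap[of _ "{..<m}"])

lemma mv_zero: "mv Phi n (\<lambda>_. 0) = (\<lambda>_. 0)"
  unfolding mv_def by simp

lemma mv_diff: "mv Phi n (\<lambda>j. a j - b j) l = mv Phi n a l - mv Phi n b l"
  unfolding mv_def by (simp add: right_diff_distrib sum_subtractf)

lemma mv_add_single:
  assumes "t < n"
  shows "mv Phi n (\<lambda>j. u j + (if j = t then \<alpha> else 0)) l = mv Phi n u l + \<alpha> * Phi l t"
proof -
  have "(\<Sum>j<n. Phi l j * (if j = t then \<alpha> else 0)) = \<alpha> * Phi l t"
    using assms by (simp add: if_distrib cong: if_cong)
  then show ?thesis
    unfolding mv_def by (simp add: distrib_left sum.distrib)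
qed

lemma sqnorm_diff_scaled_column:
  "sqnorm m (\<lambda>l. r l - \<alpha> * Phi l t)
     = sqnorm m r - 2 * \<alpha> * col_inner Phi m t r + \<alpha>\<^sup>2 * sqnorm m (\<lambda>l. Phi l t)"
  unfolding sqnorm_def col_inner_def
  by (simp add: power2_diff sum.distrib sum_subtractf sum_distrib_left power_mult_distrib mult_ac)

lemma quadratic_nonneg_imp_linear_coeff_zero:
  fixes b c :: real
  assumes "0 \<le> b" and nonneg: "\<And>\<alpha>. 0 \<le> \<alpha>\<^sup>2 * b - 2 * \<alpha> * c"
  shows "c = 0"
proof -
  have b1: "b + 1 > 0" using assms(1) by simp
  have "(c / (b + 1))\<^sup>2 * b - 2 * (c / (b + 1)) * c = - (c\<^sup>2 * (b + 2)) / (b + 1)\<^sup>2"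
    using b1 by (simp add: divide_simps power2_eq_square) (simp add: algebra_simps)
  with nonneg[of "c / (b + 1)"] have "c\<^sup>2 * (b + 2) / (b + 1)\<^sup>2 \<le> 0"
    by simp
  then have "c\<^sup>2 * (b + 2) \<le> 0"
    using b1 by (simp add: divide_le_0_iff)
  with \<open>0 \<le> b\<close> have "c\<^sup>2 \<le> 0" by (simp add: mult_le_0_iff)
  then show ?thesis by simp
qed

lemma ls_residual_le:
  assumes "ls_residual Phi m n y T r" and "\<forall>j. j \<notin> T \<longrightarrow> w j = 0"
  shows "sqnorm m r \<le> sqnorm m (\<lambda>l. y l - mv Phi n w l)"
  using assms unfolding ls_residual_def by blast

text \<open>Moving the coefficient of a column in \<open>T\<close> must not decrease the residual, so the first
variation of the residual in that direction vanishes.\<close>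
lemma ls_residual_col_inner_eq_0:
  assumes ls: "ls_residual Phi m n y T r" and "j \<in> T" and "j < n"
  shows "col_inner Phi m j r = 0"
proof -
  from ls obtain u where u: "\<forall>i. i \<notin> T \<longrightarrow> u i = 0" and r: "r = (\<lambda>l. y l - mv Phi n u l)"
    unfolding ls_residual_def by blast
  show ?thesis
  proof (rule quadratic_nonneg_imp_linear_coeff_zero)
    show "0 \<le> sqnorm m (\<lambda>l. Phi l j)" by (rule sqnorm_nonneg)
    fix \<alpha> :: real
    let ?w = "\<lambda>i. u i + (if i = j then \<alpha> else 0)"
    have "sqnorm m r \<le> sqnorm m (\<lambda>l. y l - mv Phi n ?w l)"
      using ls u \<open>j \<in> T\<close> by (intro ls_residual_le) auto
    also have "(\<lambda>l. y l - mv Phi n ?w l) = (\<lambda>l. r l - \<alpha> * Phi l j)"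
      using \<open>j < n\<close> by (simp add: r mv_add_single algebra_simps)
    finally show "0 \<le> \<alpha>\<^sup>2 * sqnorm m (\<lambda>l. Phi l j) - 2 * \<alpha> * col_inner Phi m j r"
      unfolding sqnorm_diff_scaled_column by simp
  qed
qed

text \<open>The step length \<open>c / \<beta>\<close> minimises \<open>\<alpha>\<^sup>2 \<beta> - 2 \<alpha> c\<close>, the bound on the change of the residual.\<close>
lemma sqnorm_greedy_update_le:
  fixes y u :: "nat \<Rightarrow> real"
  assumes "t < n" and "0 < \<beta>" and "sqnorm m (\<lambda>l. Phi l t) \<le> \<beta>"
  defines "r \<equiv> \<lambda>l. y l - mv Phi n u l"
  defines "c \<equiv> col_inner Phi m t r"
  shows "sqnorm m (\<lambda>l. y l - mv Phi n (\<lambda>i. u i + (if i = t then c / \<beta> else 0)) l)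
           \<le> sqnorm m r - c\<^sup>2 / \<beta>"
proof -
  have "(\<lambda>l. y l - mv Phi n (\<lambda>i. u i + (if i = t then c / \<beta> else 0)) l)
      = (\<lambda>l. r l - c / \<beta> * Phi l t)"
    using \<open>t < n\<close> by (simp add: r_def mv_add_single algebra_simps)
  then have "sqnorm m (\<lambda>l. y l - mv Phi n (\<lambda>i. u i + (if i = t then c / \<beta> else 0)) l)
      = sqnorm m r - 2 * (c / \<beta>) * c + (c / \<beta>)\<^sup>2 * sqnorm m (\<lambda>l. Phi l t)"
    unfolding c_def by (simp only: sqnorm_diff_scaled_column)
  moreover have "(c / \<beta>)\<^sup>2 * sqnorm m (\<lambda>l. Phi l t) \<le> (c / \<beta>)\<^sup>2 * \<beta>"
    using assms(3) by (simp add: mult_left_mono)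
  moreover have "(c / \<beta>)\<^sup>2 * \<beta> = c\<^sup>2 / \<beta>" "2 * (c / \<beta>) * c = 2 * (c\<^sup>2 / \<beta>)"
    using \<open>0 < \<beta>\<close> by (simp_all add: power2_eq_square)
  ultimately show ?thesis by linarith
qed

lemma card_Diff_le_card_Diff_swap:
  assumes "finite A" "finite B" "card B \<le> card A"
  shows "card (B - A) \<le> card (A - B)"
  using assms by (simp add: card_Diff_subset_Int Int_commute card_mono)

lemma powr_minus_three_halves:
  assumes "0 < (d::real)"
  shows "d powr (-3/2) = 1 / sqrt d ^ 3"
proof -
  have "d powr (3/2) = (d powr (1/2)) powr 3" by (simp add: powr_powr)
  also have "\<dots> = sqrt d ^ 3"
    using assms powr_realpow[of "sqrt d" 3] by (simp add: powr_half_sqrt)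
  finally show ?thesis
    using powr_minus_divide[of d "3/2"] by simp
qed

lemma sqrt_one_minus_sq_mult_diff_ge:
  fixes e \<sigma> \<nu> :: real
  assumes "0 < e" "e < 1/100" "0 \<le> \<sigma>" "\<nu> \<le> e * \<sigma> / 5"
  shows "(1 - e/4) * \<sigma> \<le> sqrt (1 - e\<^sup>2) * \<sigma> - \<nu>"
proof -
  have e2: "e\<^sup>2 \<le> e/100" using assms by (simp add: power2_eq_square)
  have "(1 - e\<^sup>2)\<^sup>2 \<le> 1 - e\<^sup>2"
    unfolding power2_eq_square[of "1 - e\<^sup>2"]
    by (rule mult_left_le_one_le) (use e2 assms in auto)
  then have "(1 - e\<^sup>2) * \<sigma> \<le> sqrt (1 - e\<^sup>2) * \<sigma>"
    using \<open>0 \<le> \<sigma>\<close> by (intro mult_right_mono real_le_rsqrt)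
  moreover have "e\<^sup>2 * \<sigma> \<le> e/100 * \<sigma>" using mult_right_mono[OF e2 \<open>0 \<le> \<sigma>\<close>] .
  moreover have "0 \<le> e * \<sigma>" using assms by simp
  ultimately show ?thesis using assms(4) by (simp add: algebra_simps)
qed

text \<open>The residual \<open>\<rho>\<close> obeys \<open>\<rho>\<^sup>2 - \<rho> \<nu> \<le> s a c\<close> while being at least about \<open>\<surd>s a\<close>, which forces the
correlation \<open>c\<close> up to nearly \<open>a\<close>.\<close>
lemma correlation_ge:
  fixes e a s \<rho> \<nu> c :: real
  assumes e: "0 < e" "e < 1/100" and "0 < a" "0 < s"
    and noise: "\<nu> \<le> e * (sqrt s * a) / 5"
    and residual: "sqrt (1 - e\<^sup>2) * (sqrt s * a) - \<nu> \<le> \<rho>"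
    and correlation: "\<rho>\<^sup>2 - \<rho> * \<nu> \<le> s * a * c"
  shows "(1 - 3 * e / 4) * a \<le> c"
proof -
  define \<sigma> where "\<sigma> = sqrt s * a"
  have "0 < \<sigma>" using \<open>0 < a\<close> \<open>0 < s\<close> unfolding \<sigma>_def by simp
  have \<rho>_ge: "(1 - e/4) * \<sigma> \<le> \<rho>"
    using sqrt_one_minus_sq_mult_diff_ge[OF e, of \<sigma> \<nu>] \<open>0 < \<sigma>\<close> noise residual
    unfolding \<sigma>_def by linarith
  moreover have "(1 - e/2) * \<sigma> \<le> \<rho> - \<nu>"
  proof -
    have "0 < e * \<sigma>" using e \<open>0 < \<sigma>\<close> by simp
    moreover have "(1 - e/2) * \<sigma> = (1 - e/4) * \<sigma> - e * \<sigma> / 4" by (simp add: algebra_simps)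
    ultimately show ?thesis using \<rho>_ge noise unfolding \<sigma>_def[symmetric] by linarith
  qed
  moreover have "0 \<le> (1 - e/4) * \<sigma>" "0 \<le> (1 - e/2) * \<sigma>" using e \<open>0 < \<sigma>\<close> by auto
  ultimately have "((1 - e/4) * \<sigma>) * ((1 - e/2) * \<sigma>) \<le> \<rho> * (\<rho> - \<nu>)"
    by (intro mult_mono) auto
  moreover have "((1 - e/4) * \<sigma>) * ((1 - e/2) * \<sigma>) = (1 - 3*e/4) * \<sigma>\<^sup>2 + (e * \<sigma>)\<^sup>2 / 8"
    by (simp add: algebra_simps power2_eq_square)
  moreover have "\<rho> * (\<rho> - \<nu>) = \<rho>\<^sup>2 - \<rho> * \<nu>" by (simp add: power2_eq_square algebra_simps)
  moreover have "0 \<le> (e * \<sigma>)\<^sup>2 / 8" by simp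
  ultimately have "(1 - 3*e/4) * \<sigma>\<^sup>2 \<le> s * a * c" using correlation by linarith
  moreover have "\<sigma>\<^sup>2 = s * a\<^sup>2" using \<open>0 < s\<close> unfolding \<sigma>_def by (simp add: power_mult_distrib)
  ultimately have "(1 - 3*e/4) * (s * a\<^sup>2) \<le> s * a * c" by simp
  then have "(s * a) * ((1 - 3*e/4) * a) \<le> (s * a) * c"
    by (simp add: power2_eq_square mult_ac)
  then show ?thesis using \<open>0 < a\<close> \<open>0 < s\<close> by (simp add: mult_le_cancel_left_pos)
qed

lemma correlation_sq_div_ge:
  fixes e a c :: real
  assumes e: "0 < e" "e < 1/100" and "0 < a" and c: "(1 - 3 * e / 4) * a \<le> c"
  shows "(1 - 2 * e) * a\<^sup>2 \<le> c\<^sup>2 / (1 + e\<^sup>2)"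
proof -
  have "0 \<le> (1 - 3*e/4) * a" using e \<open>0 < a\<close> by simp
  with c have "((1 - 3*e/4) * a)\<^sup>2 \<le> c\<^sup>2" by (rule power_mono)
  moreover have "(1 - 2*e) * (1 + e\<^sup>2) \<le> (1 - 3*e/4)\<^sup>2"
  proof -
    have "(1 - 2*e) * (1 + e\<^sup>2) = 1 - 2*e + e * e - 2 * (e * e * e)"
      by (simp add: algebra_simps power2_eq_square)
    moreover have "(1 - 3*e/4)\<^sup>2 = 1 - 3*e/2 + 9/16 * (e * e)"
      by (simp add: algebra_simps power2_eq_square)
    moreover have "e * e \<le> e" "0 \<le> e * e * e" using e by (simp_all add: mult_left_le_one_le)
    ultimately show ?thesis using e by linarith
  qed
  then have "(1 - 2*e) * (1 + e\<^sup>2) * a\<^sup>2 \<le> ((1 - 3*e/4) * a)\<^sup>2"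
    by (simp add: power_mult_distrib mult_right_mono)
  ultimately have "(1 - 2*e) * a\<^sup>2 * (1 + e\<^sup>2) \<le> c\<^sup>2" by (simp add: mult_ac)
  moreover have "0 < 1 + e\<^sup>2" by (simp add: add_pos_nonneg)
  ultimately show ?thesis by (simp add: pos_le_divide_eq)
qed

lemma noise_le_of_snr:
  fixes e a W K P \<nu> :: real
  assumes e: "0 < e" "e < 1/100" and "0 < a" and W: "100 * e * K < W" and "0 \<le> K"
    and snr: "\<nu>\<^sup>2 \<le> e ^ 3 * P\<^sup>2" and signal: "P\<^sup>2 \<le> (1 + e\<^sup>2) * K * a\<^sup>2"
  shows "\<nu> \<le> e * (sqrt W * a) / 5"
proof -
  have "0 \<le> 100 * e * K" using e \<open>0 \<le> K\<close> by simp
  with W have "0 \<le> W" by linarith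
  have "e\<^sup>2 \<le> 1" using e by (simp add: power_le_one)
  then have "(1 + e\<^sup>2) * (K * a\<^sup>2) \<le> 2 * (K * a\<^sup>2)"
    using \<open>0 \<le> K\<close> by (intro mult_right_mono) auto
  with signal have "e ^ 3 * P\<^sup>2 \<le> e ^ 3 * (2 * K * a\<^sup>2)"
    using e by (intro mult_left_mono) (auto simp: mult.assoc)
  also have "\<dots> = (e\<^sup>2 * a\<^sup>2 / 50) * (100 * e * K)" by (simp add: power2_eq_square power3_eq_cube)
  also have "\<dots> \<le> (e\<^sup>2 * a\<^sup>2 / 50) * W" using W by (intro mult_left_mono) auto
  also have "\<dots> \<le> (e\<^sup>2 * a\<^sup>2 / 25) * W"
    using \<open>0 \<le> W\<close> by (intro mult_right_mono) auto
  also have "\<dots> = (e * (sqrt W * a) / 5)\<^sup>2"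
    using \<open>0 \<le> W\<close> by (simp add: power_mult_distrib power_divide)
  finally have "\<nu>\<^sup>2 \<le> (e * (sqrt W * a) / 5)\<^sup>2" using snr by linarith
  then show ?thesis
    by (rule power2_le_imp_le) (use e \<open>0 < a\<close> \<open>0 \<le> W\<close> in simp)
qed

lemma sq_signal_add_noise_le:
  fixes e K a P \<nu> :: real
  assumes e: "0 < e" "e < 1/100" and "0 \<le> K" and "0 \<le> P" and "0 \<le> \<nu>"
    and snr: "\<nu>\<^sup>2 \<le> e ^ 3 * P\<^sup>2" and signal: "P\<^sup>2 \<le> (1 + e\<^sup>2) * K * a\<^sup>2"
  shows "(P + \<nu>)\<^sup>2 \<le> (1 + 4 * e) * (K * a\<^sup>2)"
proof -
  have "e ^ 3 * P\<^sup>2 = e * (e * P)\<^sup>2" by (simp add: power2_eq_square power3_eq_cube)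
  also have "\<dots> \<le> (e * P)\<^sup>2" by (rule mult_left_le_one_le) (use e in auto)
  finally have "e ^ 3 * P\<^sup>2 \<le> (e * P)\<^sup>2" .
  with snr have "\<nu>\<^sup>2 \<le> (e * P)\<^sup>2" by linarith
  then have "\<nu> \<le> e * P"
    by (rule power2_le_imp_le) (use e \<open>0 \<le> P\<close> in auto)
  then have "P + \<nu> \<le> (1 + e) * P" by (simp add: algebra_simps)
  then have "(P + \<nu>)\<^sup>2 \<le> ((1 + e) * P)\<^sup>2"
    using \<open>0 \<le> P\<close> \<open>0 \<le> \<nu>\<close> by (intro power_mono) auto
  also have "\<dots> \<le> (1 + e)\<^sup>2 * ((1 + e\<^sup>2) * K * a\<^sup>2)"
    using signal by (simp add: power_mult_distrib mult_left_mono)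
  also have "\<dots> \<le> (1 + 4 * e) * (K * a\<^sup>2)"
  proof -
    have "(1 + e)\<^sup>2 * (1 + e\<^sup>2) = 1 + 2*e + 2 * (e * e) + 2 * (e * e * e) + e * e * e * e"
      by (simp add: algebra_simps power2_eq_square)
    moreover have "e * e \<le> e * (1/100)" using e by (intro mult_left_mono) auto
    moreover have "e * e * e \<le> e * e" "e * e * e * e \<le> e * e * e"
      by (rule mult_right_le_one_le; use e in simp)+
    ultimately have "(1 + e)\<^sup>2 * (1 + e\<^sup>2) \<le> 1 + 4 * e" using e by linarith
    moreover have "0 \<le> K * a\<^sup>2" using \<open>0 \<le> K\<close> by simp
    ultimately show ?thesis
      using mult_right_mono[of "(1 + e)\<^sup>2 * (1 + e\<^sup>2)" "1 + 4 * e" "K * a\<^sup>2"] by (simp add: mult.assoc)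
  qed
  finally show ?thesis .
qed

text \<open>The two bounds on the final residual \<open>F\<close>: at least about \<open>\<surd>W a\<close>, since \<open>W\<close> indices are missed,
and at most the initial energy \<open>(P + \<nu>)\<^sup>2\<close> minus the gain \<open>(1 - 2e) a\<^sup>2\<close> of each of the \<open>K\<close> iterations.\<close>
lemma final_residual_bounds_contradict:
  fixes e a W K P \<nu> F :: real
  assumes e: "0 < e" "e < 1/100" and "0 < a" and W: "100 * e * K < W" and "0 \<le> K"
    and "0 \<le> P" and "0 \<le> \<nu>"
    and snr: "\<nu>\<^sup>2 \<le> e ^ 3 * P\<^sup>2" and signal: "P\<^sup>2 \<le> (1 + e\<^sup>2) * K * a\<^sup>2"
    and lower: "sqrt (1 - e\<^sup>2) * (sqrt W * a) - \<nu> \<le> F"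
    and upper: "F\<^sup>2 \<le> (P + \<nu>)\<^sup>2 - K * ((1 - 2 * e) * a\<^sup>2)"
  shows False
proof -
  have "0 \<le> e * K" using e \<open>0 \<le> K\<close> by simp
  with W have "0 \<le> W" by linarith
  have "\<nu> \<le> e * (sqrt W * a) / 5"
    using noise_le_of_snr[OF e \<open>0 < a\<close> W \<open>0 \<le> K\<close> snr signal] .
  with lower have "(1 - e/4) * (sqrt W * a) \<le> F"
    using sqrt_one_minus_sq_mult_diff_ge[OF e, of "sqrt W * a" \<nu>] \<open>0 \<le> W\<close> \<open>0 < a\<close> by simp
  moreover have "0 \<le> (1 - e/4) * (sqrt W * a)" using e \<open>0 \<le> W\<close> \<open>0 < a\<close> by simp
  ultimately have "((1 - e/4) * (sqrt W * a))\<^sup>2 \<le> F\<^sup>2"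
    by (intro power_mono) auto
  moreover have "((1 - e/4) * (sqrt W * a))\<^sup>2 = (1 - e/4)\<^sup>2 * (W * a\<^sup>2)"
    using \<open>0 \<le> W\<close> by (simp add: power_mult_distrib)
  moreover have "1/2 * (W * a\<^sup>2) \<le> (1 - e/4)\<^sup>2 * (W * a\<^sup>2)"
  proof (rule mult_right_mono)
    have "(1 - e/4)\<^sup>2 = 1 - e/2 + e * e / 16" by (simp add: power2_eq_square algebra_simps)
    with e show "1/2 \<le> (1 - e/4)\<^sup>2" using mult_nonneg_nonneg[of e e] by linarith
  qed (use \<open>0 \<le> W\<close> in simp)
  moreover have "(P + \<nu>)\<^sup>2 \<le> (1 + 4 * e) * (K * a\<^sup>2)"
    using sq_signal_add_noise_le[OF e \<open>0 \<le> K\<close> \<open>0 \<le> P\<close> \<open>0 \<le> \<nu>\<close> snr signal] .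
  ultimately have "W / 2 * a\<^sup>2 \<le> (12 * e * K) / 2 * a\<^sup>2"
    using upper by (simp add: algebra_simps)
  then have "W \<le> 12 * e * K" using \<open>0 < a\<close> by (simp add: mult_ac)
  with W \<open>0 \<le> e * K\<close> show False by linarith
qed

locale omp_equal_magnitude =
  fixes m n K :: nat and Phi :: "nat \<Rightarrow> nat \<Rightarrow> real" and \<delta> :: real
    and x v :: "nat \<Rightarrow> real"
  assumes K_ge_1: "K \<ge> 1" and rip: "rip_const Phi m n (2 * K) \<delta>" and delta_pos: "0 < \<delta>"
    and card_supp: "card (supp_vec n x) = K"
    and equal_magnitude: "\<forall>i j. i \<in> supp_vec n x \<longrightarrow> j \<in> supp_vec n x \<longrightarrow> \<bar>x i\<bar> = \<bar>x j\<bar>"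
begin

abbreviation "y \<equiv> \<lambda>l. mv Phi n x l + v l"
abbreviation "S \<equiv> supp_vec n x"

definition magnitude :: real where
  "magnitude = \<bar>x (SOME i. i \<in> S)\<bar>"

lemma supp_subset: "S \<subseteq> {..<n}"
  unfolding supp_vec_def by auto

lemma finite_supp: "finite S"
  using supp_subset finite_subset by blast

lemma abs_x_eq_magnitude: "i \<in> S \<Longrightarrow> \<bar>x i\<bar> = magnitude"
proof -
  assume "i \<in> S"
  then have "(SOME i. i \<in> S) \<in> S" by (rule someI)
  with \<open>i \<in> S\<close> show ?thesis unfolding magnitude_def using equal_magnitude by blast
qed

lemma magnitude_pos: "0 < magnitude"
proof -
  have "S \<noteq> {}" using card_supp K_ge_1 by auto
  then obtain i where "i \<in> S" by auto
  then show ?thesis using abs_x_eq_magnitude[of i] unfolding supp_vec_def by auto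
qed

lemma delta_lt_1: "\<delta> < 1"
  using rip unfolding rip_const_def by auto

lemma rip_bounds:
  assumes "card (supp_vec n z) \<le> 2 * K"
  shows "(1 - \<delta>) * sqnorm n z \<le> sqnorm m (mv Phi n z)"
    and "sqnorm m (mv Phi n z) \<le> (1 + \<delta>) * sqnorm n z"
  using assms rip unfolding rip_const_def rip_ineq_def by blast+

lemma sqnorm_x: "sqnorm n x = real K * magnitude\<^sup>2"
proof -
  have "sqnorm n x = (\<Sum>j\<in>S. (x j)\<^sup>2)"
    unfolding sqnorm_def using supp_subset
    by (intro sum.mono_neutral_right) (auto simp: supp_vec_def)
  also have "\<dots> = (\<Sum>j\<in>S. magnitude\<^sup>2)"
    using abs_x_eq_magnitude by (intro sum.cong) (auto, metis power2_abs)
  finally show ?thesis using card_supp by simp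
qed

lemma sqnorm_column_le: "t < n \<Longrightarrow> sqnorm m (\<lambda>l. Phi l t) \<le> 1 + \<delta>"
proof -
  assume "t < n"
  let ?e = "\<lambda>j. if j = t then (1::real) else 0"
  have "supp_vec n ?e \<subseteq> {t}" unfolding supp_vec_def by auto
  then have sparse: "card (supp_vec n ?e) \<le> 2 * K"
    using card_mono[of "{t}"] K_ge_1 by (simp add: le_trans[of _ 1])
  have "(\<Sum>j<n. (?e j)\<^sup>2) = (\<Sum>j<n. ?e j)" by (rule sum.cong) auto
  then have "sqnorm n ?e = 1" using \<open>t < n\<close> by (simp add: sqnorm_def)
  moreover have "mv Phi n ?e = (\<lambda>l. Phi l t)"
    using \<open>t < n\<close> by (simp add: mv_def fun_eq_iff if_distrib cong: if_cong)
  ultimately show ?thesis using rip_bounds(2)[OF sparse] by simp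
qed

text \<open>\<open>x - w\<close> is \<open>2K\<close>-sparse and has \<open>|S - T|\<close> entries of magnitude \<open>a\<close> outside \<open>T\<close>.\<close>
lemma residual_vnorm_lower:
  assumes "finite T" and "card T \<le> K" and w: "\<forall>j. j \<notin> T \<longrightarrow> w j = 0"
  shows "sqrt (1 - \<delta>) * (sqrt (card (S - T)) * magnitude) - vnorm m v
           \<le> vnorm m (\<lambda>l. y l - mv Phi n w l)"
proof -
  define z where "z = (\<lambda>j. x j - w j)"
  have "supp_vec n z \<subseteq> S \<union> T" using w unfolding supp_vec_def z_def by auto
  then have "card (supp_vec n z) \<le> card (S \<union> T)"
    using finite_supp \<open>finite T\<close> by (simp add: card_mono)
  also have "\<dots> \<le> card S + card T" by (rule card_Un_le)
  finally have "card (supp_vec n z) \<le> card S + card T" .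
  then have rip_z: "(1 - \<delta>) * sqnorm n z \<le> sqnorm m (mv Phi n z)"
    using \<open>card T \<le> K\<close> card_supp by (intro rip_bounds(1)) simp
  have "(\<Sum>j\<in>S - T. magnitude\<^sup>2) = (\<Sum>j\<in>S - T. (z j)\<^sup>2)"
  proof (rule sum.cong)
    fix j assume "j \<in> S - T"
    then have "z j = x j" "\<bar>x j\<bar> = magnitude"
      using w abs_x_eq_magnitude unfolding z_def by auto
    then show "magnitude\<^sup>2 = (z j)\<^sup>2" by (metis power2_abs)
  qed simp
  also have "\<dots> \<le> sqnorm n z"
    unfolding sqnorm_def using supp_subset by (intro sum_mono2) auto
  finally have "card (S - T) * magnitude\<^sup>2 \<le> sqnorm n z" by simp
  then have "(1 - \<delta>) * (card (S - T) * magnitude\<^sup>2) \<le> (1 - \<delta>) * sqnorm n z"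
    using delta_lt_1 by (intro mult_left_mono) auto
  with rip_z have "(1 - \<delta>) * (card (S - T) * magnitude\<^sup>2) \<le> sqnorm m (mv Phi n z)"
    by linarith
  then have "sqrt ((1 - \<delta>) * (card (S - T) * magnitude\<^sup>2)) \<le> vnorm m (mv Phi n z)"
    unfolding vnorm_def by (rule real_sqrt_le_mono)
  moreover have "sqrt ((1 - \<delta>) * (card (S - T) * magnitude\<^sup>2))
      = sqrt (1 - \<delta>) * (sqrt (card (S - T)) * magnitude)"
    using magnitude_pos by (simp add: real_sqrt_mult)
  moreover have "(\<lambda>l. mv Phi n z l + v l) = (\<lambda>l. y l - mv Phi n w l)"
    unfolding z_def by (auto simp: mv_diff)
  ultimately show ?thesis
    using vnorm_le_vnorm_add[of m "mv Phi n z" v] by simp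
qed

text \<open>The residual is orthogonal to \<open>\<Phi> u\<close>, so \<open>\<parallel>r\<parallel>\<^sup>2 = \<langle>r, \<Phi> x\<rangle> + \<langle>r, v\<rangle>\<close>, and only the columns in
\<open>S - T\<close> contribute to \<open>\<langle>r, \<Phi> x\<rangle>\<close>.\<close>
lemma residual_sqnorm_le_correlation:
  assumes ls: "ls_residual Phi m n y T r"
    and max_corr: "\<forall>i<n. i \<notin> T \<longrightarrow> \<bar>col_inner Phi m i r\<bar> \<le> c"
  shows "sqnorm m r - vnorm m r * vnorm m v \<le> card (S - T) * magnitude * c"
proof -
  from ls obtain u where u: "\<forall>j. j \<notin> T \<longrightarrow> u j = 0" and r: "r = (\<lambda>l. y l - mv Phi n u l)"
    unfolding ls_residual_def by blast
  have orth: "\<And>j. j \<in> T \<Longrightarrow> j < n \<Longrightarrow> col_inner Phi m j r = 0"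
    using ls by (rule ls_residual_col_inner_eq_0)
  have "dot m r (mv Phi n x) = (\<Sum>j\<in>S - T. x j * col_inner Phi m j r)"
    unfolding dot_mv using supp_subset orth
    by (intro sum.mono_neutral_right) (auto simp: supp_vec_def)
  also have "\<dots> \<le> (\<Sum>j\<in>S - T. magnitude * c)"
  proof (rule sum_mono)
    fix j assume j: "j \<in> S - T"
    then have "\<bar>x j\<bar> = magnitude" "\<bar>col_inner Phi m j r\<bar> \<le> c"
      using abs_x_eq_magnitude max_corr supp_subset by auto
    then have "\<bar>x j * col_inner Phi m j r\<bar> \<le> magnitude * c"
      using magnitude_pos by (simp add: abs_mult mult_left_mono)
    then show "x j * col_inner Phi m j r \<le> magnitude * c" by simp
  qed
  finally have signal: "dot m r (mv Phi n x) \<le> card (S - T) * magnitude * c" by simp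
  have "dot m r (mv Phi n u) = 0"
    unfolding dot_mv using orth u by (intro sum.neutral) auto
  moreover have "sqnorm m r = dot m r (mv Phi n x) + dot m r v - dot m r (mv Phi n u)"
  proof -
    have "dot m r r = (\<Sum>l<m. r l * mv Phi n x l + r l * v l - r l * mv Phi n u l)"
      unfolding dot_def by (rule sum.cong) (simp_all add: r algebra_simps)
    then show ?thesis
      unfolding dot_self by (simp add: dot_def sum.distrib sum_subtractf)
  qed
  ultimately have "sqnorm m r = dot m r (mv Phi n x) + dot m r v" by simp
  with signal dot_le_vnorm_mult[of m r v] show ?thesis by linarith
qed

lemma greedy_step_sqnorm_le:
  assumes ls: "ls_residual Phi m n y T r" and "t < n"
  shows "\<exists>w. (\<forall>j. j \<notin> insert t T \<longrightarrow> w j = 0) \<and>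
             sqnorm m (\<lambda>l. y l - mv Phi n w l) \<le> sqnorm m r - (col_inner Phi m t r)\<^sup>2 / (1 + \<delta>)"
proof -
  from ls obtain u where u: "\<forall>j. j \<notin> T \<longrightarrow> u j = 0" and r: "r = (\<lambda>l. y l - mv Phi n u l)"
    unfolding ls_residual_def by blast
  define w where "w = (\<lambda>i. u i + (if i = t then col_inner Phi m t r / (1 + \<delta>) else 0))"
  have "0 < 1 + \<delta>" using delta_pos by simp
  from sqnorm_greedy_update_le[where y = y and u = u and Phi = Phi,
      OF \<open>t < n\<close> this sqnorm_column_le[OF \<open>t < n\<close>]]
  have "sqnorm m (\<lambda>l. y l - mv Phi n w l) \<le> sqnorm m r - (col_inner Phi m t r)\<^sup>2 / (1 + \<delta>)"
    unfolding w_def r .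
  moreover have "\<forall>j. j \<notin> insert t T \<longrightarrow> w j = 0" using u by (simp add: w_def)
  ultimately show ?thesis by blast
qed

lemma sqnorm_signal_le: "sqnorm m (mv Phi n x) \<le> (1 + \<delta>) * K * magnitude\<^sup>2"
  using rip_bounds(2)[of x] card_supp unfolding sqnorm_x by (simp add: mult.assoc)

lemma sqnorm_noise_le_of_snr:
  assumes "\<delta> powr (-3/2) * sqnorm m v \<le> sqnorm m (mv Phi n x)"
  shows "sqnorm m v \<le> sqrt \<delta> ^ 3 * sqnorm m (mv Phi n x)"
  using assms delta_pos unfolding powr_minus_three_halves[OF delta_pos]
  by (simp add: divide_le_eq mult.commute)

lemma greedy_step_gain:
  assumes ls: "ls_residual Phi m n y T r" and "finite T" and "card T \<le> K" and "t < n"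
    and greedy: "\<forall>i<n. i \<notin> T \<longrightarrow> \<bar>col_inner Phi m i r\<bar> \<le> \<bar>col_inner Phi m t r\<bar>"
    and small: "sqrt \<delta> < 1/100" and "0 < W" and missing: "W \<le> card (S - T)"
    and noise: "vnorm m v \<le> sqrt \<delta> * (sqrt W * magnitude) / 5"
  shows "\<exists>w. (\<forall>j. j \<notin> insert t T \<longrightarrow> w j = 0) \<and>
             sqnorm m (\<lambda>l. y l - mv Phi n w l) \<le> sqnorm m r - (1 - 2 * sqrt \<delta>) * magnitude\<^sup>2"
proof -
  define e where "e = sqrt \<delta>"
  have e: "0 < e" "e < 1/100" using delta_pos small by (simp_all add: e_def)
  have \<delta>: "\<delta> = e\<^sup>2" using delta_pos by (simp add: e_def)
  have "e * (sqrt W * magnitude) \<le> e * (sqrt (card (S - T)) * magnitude)"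
    using e magnitude_pos missing by (intro mult_left_mono mult_right_mono) auto
  with noise have noise_T: "vnorm m v \<le> e * (sqrt (card (S - T)) * magnitude) / 5"
    unfolding e_def by linarith
  from ls obtain u where u: "\<forall>j. j \<notin> T \<longrightarrow> u j = 0" and r: "r = (\<lambda>l. y l - mv Phi n u l)"
    unfolding ls_residual_def by blast
  have "sqrt (1 - e\<^sup>2) * (sqrt (card (S - T)) * magnitude) - vnorm m v \<le> vnorm m r"
    using residual_vnorm_lower[OF \<open>finite T\<close> \<open>card T \<le> K\<close> u] unfolding r \<delta> .
  moreover have "(vnorm m r)\<^sup>2 - vnorm m r * vnorm m v
      \<le> card (S - T) * magnitude * \<bar>col_inner Phi m t r\<bar>"
    unfolding vnorm_power2 using residual_sqnorm_le_correlation[OF ls] greedy by blast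
  moreover have "0 < real (card (S - T))" using \<open>0 < W\<close> missing by linarith
  ultimately have "(1 - 3 * e / 4) * magnitude \<le> \<bar>col_inner Phi m t r\<bar>"
    using correlation_ge[OF e magnitude_pos _ noise_T] by blast
  from correlation_sq_div_ge[OF e magnitude_pos this]
  have "(1 - 2 * e) * magnitude\<^sup>2 \<le> (col_inner Phi m t r)\<^sup>2 / (1 + \<delta>)"
    unfolding \<delta> by simp
  with greedy_step_sqnorm_le[OF ls \<open>t < n\<close>] show ?thesis
    unfolding e_def by (meson order_trans diff_left_mono)
qed

text \<open>The hypotheses only concern the final support \<open>set ts\<close>; they hold for every earlier
support since \<open>S - T\<^sup>k\<close> only shrinks.\<close>
lemma omp_residual_energy_decrease:
  assumes run: "omp_run Phi m n y K ts" and "k \<le> K"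
    and small: "sqrt \<delta> < 1/100" and "0 < W" and missing: "W \<le> card (S - set ts)"
    and noise: "vnorm m v \<le> sqrt \<delta> * (sqrt W * magnitude) / 5"
  shows "\<exists>w. (\<forall>j. j \<notin> set (take k ts) \<longrightarrow> w j = 0) \<and>
             sqnorm m (\<lambda>l. y l - mv Phi n w l) \<le> sqnorm m y - k * ((1 - 2 * sqrt \<delta>) * magnitude\<^sup>2)"
  using \<open>k \<le> K\<close>
proof (induction k)
  case 0
  show ?case by (intro exI[of _ "\<lambda>_. 0"]) (simp add: mv_zero)
next
  case (Suc k)
  define D where "D = (1 - 2 * sqrt \<delta>) * magnitude\<^sup>2"
  from Suc have "k < K" by simp
  with run obtain r where ls: "ls_residual Phi m n y (set (take k ts)) r" and "ts ! k < n"
    and greedy: "\<forall>i<n. i \<notin> set (take k ts) \<longrightarrow>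
                   \<bar>col_inner Phi m i r\<bar> \<le> \<bar>col_inner Phi m (ts ! k) r\<bar>"
    unfolding omp_run_def by blast
  from Suc obtain w0 where "\<forall>j. j \<notin> set (take k ts) \<longrightarrow> w0 j = 0"
    and "sqnorm m (\<lambda>l. y l - mv Phi n w0 l) \<le> sqnorm m y - k * D"
    unfolding D_def by auto
  with ls_residual_le[OF ls] have r_le: "sqnorm m r \<le> sqnorm m y - k * D"
    using order_trans by blast
  have "card (S - set ts) \<le> card (S - set (take k ts))"
    using finite_supp set_take_subset[of k ts] by (intro card_mono) auto
  moreover have "card (set (take k ts)) \<le> K"
    using card_length[of "take k ts"] \<open>k < K\<close> by simp
  ultimately obtain w where w_supp: "\<forall>j. j \<notin> insert (ts ! k) (set (take k ts)) \<longrightarrow> w j = 0"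
    and w_le: "sqnorm m (\<lambda>l. y l - mv Phi n w l) \<le> sqnorm m r - D"
    using greedy_step_gain[OF ls _ _ \<open>ts ! k < n\<close> greedy small \<open>0 < W\<close> _ noise] missing
    unfolding D_def by fastforce
  have "insert (ts ! k) (set (take k ts)) = set (take (Suc k) ts)"
    using \<open>k < K\<close> run by (simp add: omp_run_def take_Suc_conv_app_nth)
  moreover have "sqnorm m (\<lambda>l. y l - mv Phi n w l) \<le> sqnorm m y - Suc k * D"
    using w_le r_le by (simp add: distrib_right)
  ultimately show ?case using w_supp unfolding D_def by auto
qed

lemma missed_support_le:
  assumes snr: "\<delta> powr (-3/2) * sqnorm m v \<le> sqnorm m (mv Phi n x)"
    and run: "omp_run Phi m n y K ts"
  shows "card (S - set ts) \<le> 100 * sqrt \<delta> * K"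
proof (rule ccontr)
  define e W P \<nu> where "e = sqrt \<delta>" and "W = card (S - set ts)"
    and "P = vnorm m (mv Phi n x)" and "\<nu> = vnorm m v"
  assume "\<not> card (S - set ts) \<le> 100 * sqrt \<delta> * K"
  then have W_gt: "100 * e * K < W" by (simp add: e_def W_def)
  have "0 < e" and \<delta>: "\<delta> = e\<^sup>2" using delta_pos by (simp_all add: e_def)
  have "W \<le> K"
    unfolding W_def using card_mono[OF finite_supp, of "S - set ts"] card_supp by auto
  with W_gt have "(100 * e) * real K < 1 * real K" by simp
  then have "100 * e < 1" by (rule mult_right_less_imp_less) simp
  then have e: "0 < e" "e < 1/100" using \<open>0 < e\<close> by simp_all
  have snr': "\<nu>\<^sup>2 \<le> e ^ 3 * P\<^sup>2"
    using sqnorm_noise_le_of_snr[OF snr] unfolding \<nu>_def P_def vnorm_power2 e_def .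
  have signal: "P\<^sup>2 \<le> (1 + e\<^sup>2) * K * magnitude\<^sup>2"
    using sqnorm_signal_le unfolding P_def vnorm_power2 \<delta> .
  have "0 < 100 * e * K" using e K_ge_1 by simp
  with W_gt have "0 < W" by simp
  moreover have "\<nu> \<le> e * (sqrt W * magnitude) / 5"
    using noise_le_of_snr[OF e magnitude_pos W_gt of_nat_0_le_iff snr' signal] .
  moreover have "take K ts = ts" using run by (simp add: omp_run_def)
  ultimately obtain w where w: "\<forall>j. j \<notin> set ts \<longrightarrow> w j = 0"
    and upper: "sqnorm m (\<lambda>l. y l - mv Phi n w l) \<le> sqnorm m y - K * ((1 - 2 * e) * magnitude\<^sup>2)"
    using omp_residual_energy_decrease[OF run order_refl, of W] e
    unfolding e_def W_def \<nu>_def by auto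
  have "card (set ts) \<le> K" using run card_length[of ts] unfolding omp_run_def by simp
  then have lower: "sqrt (1 - e\<^sup>2) * (sqrt W * magnitude) - \<nu> \<le> vnorm m (\<lambda>l. y l - mv Phi n w l)"
    using residual_vnorm_lower[OF _ _ w] unfolding W_def \<nu>_def \<delta> by simp
  have "vnorm m y \<le> P + \<nu>" unfolding P_def \<nu>_def by (rule vnorm_add_le)
  then have "sqnorm m y \<le> (P + \<nu>)\<^sup>2"
    unfolding vnorm_power2[symmetric] using vnorm_nonneg by (intro power_mono) auto
  with upper have "(vnorm m (\<lambda>l. y l - mv Phi n w l))\<^sup>2 \<le> (P + \<nu>)\<^sup>2 - K * ((1 - 2 * e) * magnitude\<^sup>2)"
    unfolding vnorm_power2 by linarith
  then show False
    using final_residual_bounds_contradict[OF e magnitude_pos W_gt of_nat_0_le_iff _ _ snr' signal lower]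
    unfolding P_def \<nu>_def by (simp add: vnorm_nonneg)
qed

lemma false_support_ratio_le:
  assumes "\<delta> powr (-3/2) * sqnorm m v \<le> sqnorm m (mv Phi n x)"
    and run: "omp_run Phi m n y K ts"
  shows "card (set ts - S) / K \<le> 100 * sqrt \<delta>"
proof -
  have "card (set ts) \<le> card S"
    using run card_length[of ts] card_supp unfolding omp_run_def by simp
  then have "card (set ts - S) \<le> card (S - set ts)"
    using finite_supp by (intro card_Diff_le_card_Diff_swap) auto
  also have "card (S - set ts) \<le> 100 * sqrt \<delta> * K"
    using missed_support_le[OF assms] .
  finally show ?thesis
    using K_ge_1 by (simp add: divide_le_eq)
qed

end

theorem corollary1:
  "\<exists>C>0. \<forall>(m::nat) (n::nat) (K::nat) (Phi::nat \<Rightarrow> nat \<Rightarrow> real) (\<delta>::real)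
            (x::nat \<Rightarrow> real) (v::nat \<Rightarrow> real) (ts::nat list).
     K \<ge> 1 \<longrightarrow>
     rip_const Phi m n (2 * K) \<delta> \<longrightarrow> 0 < \<delta> \<longrightarrow>
     card (supp_vec n x) = K \<longrightarrow>
     (\<forall>i j. i \<in> supp_vec n x \<longrightarrow> j \<in> supp_vec n x \<longrightarrow> \<bar>x i\<bar> = \<bar>x j\<bar>) \<longrightarrow>
     sqnorm m (mv Phi n x) \<ge> \<delta> powr (-3/2) * sqnorm m v \<longrightarrow>
     omp_run Phi m n (\<lambda>l. mv Phi n x l + v l) K ts \<longrightarrow>
     real (card (set ts - supp_vec n x)) / real K \<le> C * sqrt \<delta>"
proof (intro exI[of _ "100 :: real"] conjI allI impI)
  fix m n K Phi \<delta> x v ts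
  assume "K \<ge> 1" "rip_const Phi m n (2 * K) \<delta>" "0 < \<delta>" "card (supp_vec n x) = K"
    "\<forall>i j. i \<in> supp_vec n x \<longrightarrow> j \<in> supp_vec n x \<longrightarrow> \<bar>x i\<bar> = \<bar>x j\<bar>"
  then interpret omp_equal_magnitude m n K Phi \<delta> x v
    by unfold_locales
  show "sqnorm m (mv Phi n x) \<ge> \<delta> powr (-3/2) * sqnorm m v \<Longrightarrow>
      omp_run Phi m n (\<lambda>l. mv Phi n x l + v l) K ts \<Longrightarrow>
      real (card (set ts - supp_vec n x)) / real K \<le> 100 * sqrt \<delta>"
    by (rule false_support_ratio_le)
qed simp

end
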